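(* Let $m_1,m_2$ be positive real numbers with $m_1\leq 1.8m_2$. Then the complete graph $K_t$ belongs to $\mathcal{G}_{m_1,m_2}$ for every integer $1\leq t\leq \lfloor 2m_1\rfloor$.
   Context: All graphs are finite and simple. For a graph $H$, $|H|$ denotes its number of vertices and $\lVert H\rVert$ its number of edges. For real numbers $m_1,m_2$, $\mathcal{G}_{m_1,m_2}$ is the class of graphs $G$ such that $\lVert H\rVert\leq m_1|H|$ for every subgraph $H$ of $G$, and $\lVert H\rVert\leq m_2|H|$ for every bipartite subgraph $H$ of $G$. *)

theory Defs
  imports Complex_Main
begin

definition simple_graph :: "'a set \<Rightarrow> 'a set set \<Rightarrow> bool" where
  "simple_graph V E \<longleftrightarrow> finite V \<and> (\<forall>e\<in>E. e \<subseteq> V \<and> card e = 2)"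

definition subgraph :: "'a set \<Rightarrow> 'a set set \<Rightarrow> 'a set \<Rightarrow> 'a set set \<Rightarrow> bool" where
  "subgraph V' E' V E \<longleftrightarrow> V' \<subseteq> V \<and> E' \<subseteq> E \<and> (\<forall>e\<in>E'. e \<subseteq> V')"

definition bipartite :: "'a set \<Rightarrow> 'a set set \<Rightarrow> bool" where
  "bipartite V E \<longleftrightarrow> (\<exists>A B. A \<inter> B = {} \<and> A \<union> B = V \<and>
      (\<forall>e\<in>E. e \<inter> A \<noteq> {} \<and> e \<inter> B \<noteq> {}))"

definition in_G_class :: "real \<Rightarrow> real \<Rightarrow> 'a set \<Rightarrow> 'a set set \<Rightarrow> bool" where
  "in_G_class m1 m2 V E \<longleftrightarrow>
     (\<forall>V' E'. subgraph V' E' V E \<longrightarrow> real (card E') \<le> m1 * real (card V')) \<and>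
     (\<forall>V' E'. subgraph V' E' V E \<and> bipartite V' E' \<longrightarrow> real (card E') \<le> m2 * real (card V'))"

definition complete_verts :: "nat \<Rightarrow> nat set" where
  "complete_verts t = {0..<t}"

definition complete_edges :: "nat \<Rightarrow> nat set set" where
  "complete_edges t = {{u, v} | u v. u < t \<and> v < t \<and> u \<noteq> v}"

end

theory Submission
  imports Defs
begin

text \<open>A subgraph of a graph on \<open>n\<close> vertices has \<open>k \<le> n\<close> vertices, hence at most \<open>k(k-1)/2 \<le> k(n-1)/2\<close>
  edges, and at most \<open>k\<^sup>2/4 \<le> kn/4\<close> edges if it is bipartite.  For \<open>K\<^sub>t\<close> with \<open>t \<le> 2m\<^sub>1 \<le> 3.6m\<^sub>2\<close>
  both bounds are below \<open>m\<^sub>1 k\<close> and \<open>m\<^sub>2 k\<close> respectively.\<close>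

lemma simple_graph_subgraph:
  assumes "simple_graph V E" and "subgraph V' E' V E"
  shows "simple_graph V' E'"
  using assms unfolding simple_graph_def subgraph_def by (auto intro: finite_subset)

lemma card_le_if_subgraph:
  assumes "simple_graph V E" and "subgraph V' E' V E"
  shows "card V' \<le> card V"
  using assms by (intro card_mono) (auto simp: simple_graph_def subgraph_def)

lemma simple_graph_complete: "simple_graph (complete_verts t) (complete_edges t)"
  unfolding simple_graph_def complete_verts_def complete_edges_def by auto

lemma card_complete_verts [simp]: "card (complete_verts t) = t"
  by (simp add: complete_verts_def)

lemma simple_graph_card_edges_le:
  assumes "simple_graph V E"
  shows "2 * card E \<le> card V * (card V - 1)"
proof -
  have fin: "finite V" using assms by (simp add: simple_graph_def)
  have "E \<subseteq> {e. e \<subseteq> V \<and> card e = 2}" using assms by (auto simp: simple_graph_def)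
  then have "card E \<le> card {e. e \<subseteq> V \<and> card e = 2}"
    using fin by (intro card_mono) auto
  also have "\<dots> = card V choose 2" using n_subsets[OF fin] by simp
  finally show ?thesis by (simp add: choose_two)
qed

lemma bipartite_card_edges_le_mult:
  assumes "simple_graph V E" and "A \<inter> B = {}" and "A \<union> B = V"
    and cross: "\<forall>e\<in>E. e \<inter> A \<noteq> {} \<and> e \<inter> B \<noteq> {}"
  shows "card E \<le> card A * card B"
proof -
  have "E \<subseteq> (\<lambda>(a, b). {a, b}) ` (A \<times> B)"
  proof
    fix e assume e: "e \<in> E"
    obtain a b where ab: "a \<in> e" "a \<in> A" "b \<in> e" "b \<in> B" using cross e by blast
    have "card e = 2" using assms(1) e by (simp add: simple_graph_def)
    moreover have "a \<noteq> b" using ab assms(2) by blast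
    ultimately have "e = {a, b}" using ab by (auto simp: card_2_iff)
    then show "e \<in> (\<lambda>(a, b). {a, b}) ` (A \<times> B)" using ab by blast
  qed
  moreover have "finite (A \<times> B)"
    using assms(1,3) finite_Un by (auto simp: simple_graph_def)
  ultimately have "card E \<le> card (A \<times> B)"
    by (meson card_image_le card_mono finite_imageI le_trans)
  then show ?thesis by (simp add: card_cartesian_product)
qed

lemma four_mult_le_square_add: "4 * (a * b) \<le> (a + b :: nat)\<^sup>2"
proof -
  have "(int a + int b)\<^sup>2 = (int a - int b)\<^sup>2 + 4 * (int a * int b)"
    by (simp add: power2_eq_square algebra_simps)
  then have "4 * (int a * int b) \<le> (int a + int b)\<^sup>2" by simp
  then show ?thesis by (simp flip: of_nat_mult of_nat_add of_nat_power)
qed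

lemma bipartite_card_edges_le:
  assumes "simple_graph V E" and "bipartite V E"
  shows "4 * card E \<le> (card V)\<^sup>2"
proof -
  obtain A B where AB: "A \<inter> B = {}" "A \<union> B = V" "\<forall>e\<in>E. e \<inter> A \<noteq> {} \<and> e \<inter> B \<noteq> {}"
    using assms(2) by (auto simp: bipartite_def)
  have "finite V" using assms(1) by (simp add: simple_graph_def)
  then have card_V: "card V = card A + card B"
    using AB by (metis card_Un_disjoint finite_Un)
  then show ?thesis
    using bipartite_card_edges_le_mult[OF assms(1) AB] four_mult_le_square_add[of "card A" "card B"]
    by simp
qed

lemma in_G_class_if_card_le:
  assumes graph: "simple_graph V E"
    and dense: "real (card V) - 1 \<le> 2 * m1" and bip: "real (card V) \<le> 4 * m2"
  shows "in_G_class m1 m2 V E"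
  unfolding in_G_class_def
proof (intro conjI allI impI)
  fix V' E' assume sub: "subgraph V' E' V E"
  have graph': "simple_graph V' E'" by (rule simple_graph_subgraph[OF graph sub])
  have "card V' \<le> card V" using card_le_if_subgraph graph sub by blast
  then have "2 * card E' \<le> card V' * (card V - 1)"
    using simple_graph_card_edges_le[OF graph'] by (meson diff_le_mono le_trans mult_le_mono2)
  then have "2 * real (card E') \<le> real (card V') * real (card V - 1)"
    by (metis of_nat_le_iff of_nat_mult of_nat_numeral)
  \<comment> \<open>if \<open>V'\<close> is nonempty then \<open>card V \<ge> 1\<close>, so \<open>card V - 1\<close> is not truncated\<close>
  also have "\<dots> \<le> real (card V') * (2 * m1)"
    using dense \<open>card V' \<le> card V\<close> by (cases "card V' = 0") (auto intro!: mult_left_mono)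
  finally show "real (card E') \<le> m1 * real (card V')" by (simp add: ac_simps)
next
  fix V' E' assume sub: "subgraph V' E' V E \<and> bipartite V' E'"
  have graph': "simple_graph V' E'" using simple_graph_subgraph graph sub by blast
  have "card V' \<le> card V" using card_le_if_subgraph graph sub by blast
  have "4 * real (card E') \<le> real (card V') * real (card V')"
    using bipartite_card_edges_le[OF graph'] sub
    by (metis of_nat_le_iff of_nat_mult of_nat_numeral power2_eq_square)
  also have "\<dots> \<le> real (card V') * (4 * m2)"
    using bip \<open>card V' \<le> card V\<close> by (intro mult_left_mono) auto
  finally show "real (card E') \<le> m2 * real (card V')" by (simp add: ac_simps)
qed

theorem lemma2:
  fixes m1 m2 :: real and t :: nat
  assumes "m1 > 0" and "m2 > 0" and "m1 \<le> 1.8 * m2"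
    and "1 \<le> t" and "int t \<le> \<lfloor>2 * m1\<rfloor>"
  shows "in_G_class m1 m2 (complete_verts t) (complete_edges t)"
proof (rule in_G_class_if_card_le[OF simple_graph_complete])
  have "real t \<le> 2 * m1" using assms(5) by linarith
  then show "real (card (complete_verts t)) - 1 \<le> 2 * m1"
    and "real (card (complete_verts t)) \<le> 4 * m2"
    using assms(2,3) by simp_all
qed

end
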